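(* For every $f\in L^{\infty}(\mathbb{R}_+)$, $\overline{M}_1(f)\le\overline{R}(f)$.
   Context: $L^{\infty}(\mathbb{R}_+)$: real-valued essentially bounded measurable functions on $[0,\infty)$. $\overline{M}_1(f)=\lim_{\theta\to\infty}\limsup_{x\to\infty}\frac1\theta\int_x^{x+\theta}f(t)\,dt$ and $\overline{R}(f)=\limsup_{x\to\infty}e^{-x}\int_0^xf(t)e^t\,dt$. *)

theory Defs
  imports "HOL-Analysis.Analysis"
begin

text \<open>Real-valued essentially bounded (Lebesgue-)measurable functions on [0,\<infinity>).
  Values of f at negative arguments are irrelevant.\<close>
definition Linf_Rplus :: "(real \<Rightarrow> real) set" where
  "Linf_Rplus = {f. f \<in> borel_measurable (restrict_space lebesgue {0..}) \<and>
      (\<exists>C. AE t in lebesgue. t \<ge> 0 \<longrightarrow> \<bar>f t\<bar> \<le> C)}"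

definition M1_upper :: "(real \<Rightarrow> real) \<Rightarrow> ereal" where
  "M1_upper f = Lim at_top (\<lambda>\<theta>::real. Limsup at_top
      (\<lambda>x::real. ereal ((1 / \<theta>) * (LINT t:{x..x+\<theta>}|lebesgue. f t))))"

definition R_upper :: "(real \<Rightarrow> real) \<Rightarrow> ereal" where
  "R_upper f = Limsup at_top
      (\<lambda>x::real. ereal (exp (- x) * (LINT t:{0..x}|lebesgue. f t * exp t)))"

end

theory Submission
  imports Defs
begin

text \<open>Replace \<open>f\<close> by a Borel function \<open>h\<close> with \<open>\<bar>h\<bar> \<le> C\<close> that agrees with \<open>f\<close>
  almost everywhere on \<open>[0,\<infinity>)\<close>, and put \<open>F(x) = exp(-x) \<integral>[0,x] h(t) exp(t) dt\<close>, so that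
  \<open>R(f) = limsup F\<close> and \<open>\<bar>F\<bar> \<le> C\<close>. Since \<open>F' = h - F\<close>, integrating over a window gives
  \<open>\<integral>[x,x+\<theta>] h = F(x+\<theta>) - F(x) + \<integral>[x,x+\<theta>] F \<le> 2C + \<theta> sup{F(t) | t \<ge> x}\<close>;
  as \<open>h\<close> is merely measurable, this identity is obtained from Fubini's theorem rather than
  from the fundamental theorem of calculus. Hence the upper average \<open>G(\<theta>)\<close> of \<open>f\<close> over windows
  of length \<open>\<theta>\<close> satisfies \<open>G(\<theta>) \<le> R(f) + 2C/\<theta>\<close>. Because \<open>M\<^sub>1(f)\<close> is the limit of \<open>G\<close>, its
  existence must be shown too: tiling a long window by windows of a fixed length \<open>a\<close> gives
  \<open>G(\<theta>) \<le> G(a) + O(a/\<theta>)\<close>, hence \<open>limsup G \<le> inf G \<le> liminf G\<close>.\<close>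

section \<open>Upper averages of additive window functions\<close>

lemma Limsup_ereal_bounded:
  fixes u :: "'a \<Rightarrow> real"
  assumes "F \<noteq> bot" and bound: "eventually (\<lambda>x. \<bar>u x\<bar> \<le> B) F"
  obtains r where "Limsup F (\<lambda>x. ereal (u x)) = ereal r" and "\<bar>r\<bar> \<le> B"
proof -
  have "Limsup F (\<lambda>x. ereal (u x)) \<le> ereal B"
    by (rule Limsup_bounded) (use bound in \<open>auto elim!: eventually_mono\<close>)
  moreover have "ereal (- B) \<le> Limsup F (\<lambda>x. ereal (u x))"
    by (rule le_Limsup) (use assms in \<open>auto elim!: eventually_mono\<close>)
  ultimately show ?thesis
    using that by (cases "Limsup F (\<lambda>x. ereal (u x))") auto
qed

definition upper_window_avg :: "(real \<Rightarrow> real \<Rightarrow> real) \<Rightarrow> real \<Rightarrow> ereal" where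
  "upper_window_avg I \<theta> = Limsup at_top (\<lambda>x. ereal ((1 / \<theta>) * I x \<theta>))"

locale additive_window_function =
  fixes I :: "real \<Rightarrow> real \<Rightarrow> real" and C :: real
  assumes window_abs_le: "0 \<le> x \<Longrightarrow> 0 \<le> \<theta> \<Longrightarrow> \<bar>I x \<theta>\<bar> \<le> C * \<theta>"
    and window_add: "0 \<le> x \<Longrightarrow> 0 \<le> a \<Longrightarrow> 0 \<le> b \<Longrightarrow> I x (a + b) = I x a + I (x + a) b"
begin

lemma window_bound_nonneg: "0 \<le> C"
  using window_abs_le[of 0 1] by simp

lemma upper_window_avg_real:
  assumes "0 < \<theta>"
  obtains r where "upper_window_avg I \<theta> = ereal r" and "\<bar>r\<bar> \<le> C"
proof (rule Limsup_ereal_bounded[of at_top _ C])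
  show "eventually (\<lambda>x. \<bar>(1 / \<theta>) * I x \<theta>\<bar> \<le> C) at_top"
    using eventually_ge_at_top[of 0]
  proof eventually_elim
    case (elim x)
    then show ?case
      using window_abs_le[of x \<theta>] assms by (simp add: abs_mult divide_simps mult.commute)
  qed
qed (auto simp: upper_window_avg_def that)

lemma window_concat_le:
  assumes short: "\<And>x. x0 \<le> x \<Longrightarrow> I x a \<le> a * c" and "0 \<le> x0" "0 \<le> a" "x0 \<le> x" "0 \<le> s"
  shows "I x (real n * a + s) \<le> real n * a * c + C * s"
  using assms(4)
proof (induction n arbitrary: x)
  case 0
  then show ?case
    using window_abs_le[of x s] assms by simp
next
  case (Suc n)
  have "I x (real (Suc n) * a + s) = I x a + I (x + a) (real n * a + s)"
    using window_add[of x a "real n * a + s"] Suc.prems assms by (simp add: algebra_simps)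
  also have "\<dots> \<le> a * c + (real n * a * c + C * s)"
    using short Suc assms by (intro add_mono) auto
  finally show ?case by (simp add: algebra_simps)
qed

lemma window_le_of_short_windows:
  assumes a: "0 < a" and short: "\<And>x. x0 \<le> x \<Longrightarrow> I x a \<le> a * c"
    and "0 \<le> x0" "x0 \<le> x" "0 \<le> \<theta>"
  shows "I x \<theta> \<le> \<theta> * c + a * (C + \<bar>c\<bar>)"
proof -
  define n where "n = nat \<lfloor>\<theta> / a\<rfloor>"
  define s where "s = \<theta> - real n * a"
  have "real n \<le> \<theta> / a" "\<theta> / a < real n + 1"
    using assms by (auto simp: n_def)
  then have s: "0 \<le> s" "s \<le> a"
    using a by (auto simp: s_def field_simps)
  have "I x \<theta> = I x (real n * a + s)"
    by (simp add: s_def)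
  also have "\<dots> \<le> real n * a * c + C * s"
    using window_concat_le[OF short] assms s by auto
  also have "\<dots> = \<theta> * c + s * (C - c)"
    by (simp add: s_def algebra_simps)
  also have "\<dots> \<le> \<theta> * c + s * (C + \<bar>c\<bar>)"
    using s by (intro add_left_mono mult_left_mono) auto
  also have "\<dots> \<le> \<theta> * c + a * (C + \<bar>c\<bar>)"
    using s window_bound_nonneg by (intro add_left_mono mult_right_mono) auto
  finally show ?thesis .
qed

lemma eventually_upper_window_avg_le:
  assumes a: "0 < a" and e: "0 < e"
  shows "eventually (\<lambda>\<theta>. upper_window_avg I \<theta> \<le> upper_window_avg I a + ereal e) at_top"
proof -
  obtain r where r: "upper_window_avg I a = ereal r"
    using upper_window_avg_real[OF a] by blast
  define c where "c = r + e / 2"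
  have "eventually (\<lambda>x. ereal ((1 / a) * I x a) < ereal c) at_top"
    using e r by (intro Limsup_lessD) (simp add: upper_window_avg_def c_def)
  then obtain x1 where x1: "\<And>x. x1 \<le> x \<Longrightarrow> (1 / a) * I x a < c"
    by (auto simp: eventually_at_top_linorder)
  define x0 where "x0 = max x1 0"
  have x0_nonneg: "0 \<le> x0"
    by (simp add: x0_def)
  have short: "I x a \<le> a * c" if "x0 \<le> x" for x
    using x1[of x] that a by (simp add: x0_def field_simps)
  have "upper_window_avg I \<theta> \<le> ereal (r + e)" if \<theta>: "max 1 (2 * a * (C + \<bar>c\<bar>) / e) \<le> \<theta>" for \<theta>
    unfolding upper_window_avg_def
  proof (rule Limsup_bounded)
    have small: "a * (C + \<bar>c\<bar>) / \<theta> \<le> e / 2"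
      using \<theta> e by (simp add: field_simps)
    show "eventually (\<lambda>x. ereal ((1 / \<theta>) * I x \<theta>) \<le> ereal (r + e)) at_top"
      using eventually_ge_at_top[of x0]
    proof eventually_elim
      case (elim x)
      have "I x \<theta> \<le> \<theta> * c + a * (C + \<bar>c\<bar>)"
        by (rule window_le_of_short_windows[OF a short]) (use elim \<theta> in \<open>auto simp: x0_nonneg\<close>)
      then have "(1 / \<theta>) * I x \<theta> \<le> c + a * (C + \<bar>c\<bar>) / \<theta>"
        using \<theta> by (simp add: field_simps)
      then show ?case
        unfolding ereal_less_eq using small c_def by linarith
    qed
  qed
  then show ?thesis
    using r by (auto intro: eventually_at_top_linorderI[of "max 1 (2 * a * (C + \<bar>c\<bar>) / e)"])
qed

lemma upper_window_avg_tendsto_Limsup: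
  "(upper_window_avg I \<longlongrightarrow> Limsup at_top (upper_window_avg I)) at_top"
proof (rule Liminf_eq_Limsup)
  have "Limsup at_top (upper_window_avg I) \<le> upper_window_avg I a" if "0 < a" for a
  proof (rule ereal_le_epsilon2)
    fix e :: real assume "0 < e"
    then show "Limsup at_top (upper_window_avg I) \<le> upper_window_avg I a + ereal e"
      using eventually_upper_window_avg_le[OF \<open>0 < a\<close>] by (intro Limsup_bounded) auto
  qed
  then have "Limsup at_top (upper_window_avg I) \<le> Liminf at_top (upper_window_avg I)"
    by (intro Liminf_bounded eventually_mono[OF eventually_gt_at_top[of 0]]) auto
  then show "Liminf at_top (upper_window_avg I) = Limsup at_top (upper_window_avg I)"
    by (intro antisym Liminf_le_Limsup) auto
qed auto

lemma upper_window_avg_le_Limsup: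
  assumes F_abs: "\<And>t. 0 \<le> t \<Longrightarrow> \<bar>F t\<bar> \<le> C"
    and window_le: "\<And>x \<theta> c. 0 \<le> x \<Longrightarrow> 0 \<le> \<theta> \<Longrightarrow> (\<And>t. x \<le> t \<Longrightarrow> F t \<le> c) \<Longrightarrow>
      I x \<theta> \<le> 2 * C + c * \<theta>"
  shows "Lim at_top (upper_window_avg I) \<le> Limsup at_top (\<lambda>x. ereal (F x))"
proof -
  obtain r where r: "Limsup at_top (\<lambda>x. ereal (F x)) = ereal r"
    using Limsup_ereal_bounded[of at_top F C] F_abs
    by (metis eventually_at_top_linorder trivial_limit_at_top_linorder)
  have avg_le: "upper_window_avg I \<theta> \<le> ereal (r + 2 * C / \<theta>)" if \<theta>: "0 < \<theta>" for \<theta>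
  proof (rule ereal_le_epsilon2)
    fix e :: real assume "0 < e"
    then have "eventually (\<lambda>x. ereal (F x) < ereal (r + e)) at_top"
      using r by (intro Limsup_lessD) simp
    then obtain x1 where x1: "\<And>x. x1 \<le> x \<Longrightarrow> F x < r + e"
      by (auto simp: eventually_at_top_linorder)
    have "eventually (\<lambda>x. ereal ((1 / \<theta>) * I x \<theta>) \<le> ereal (r + 2 * C / \<theta> + e)) at_top"
      using eventually_ge_at_top[of "max x1 0"]
    proof eventually_elim
      case (elim x)
      then have "I x \<theta> \<le> 2 * C + (r + e) * \<theta>"
        using x1 \<theta> by (intro window_le) (auto intro: less_imp_le)
      then show ?case
        using \<theta> by (simp add: field_simps)
    qed
    then show "upper_window_avg I \<theta> \<le> ereal (r + 2 * C / \<theta>) + ereal e"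
      unfolding upper_window_avg_def by (simp add: Limsup_bounded)
  qed
  have "((\<lambda>\<theta>. 2 * C / \<theta>) \<longlongrightarrow> 0) at_top"
    by (intro tendsto_divide_0[OF tendsto_const] filterlim_at_top_imp_at_infinity filterlim_ident)
  then have "((\<lambda>\<theta>. ereal (r + 2 * C / \<theta>)) \<longlongrightarrow> ereal r) at_top"
    using tendsto_add[OF tendsto_const, of _ 0 at_top r] by (simp add: lim_ereal)
  then have "Limsup at_top (\<lambda>\<theta>. ereal (r + 2 * C / \<theta>)) = ereal r"
    by (intro lim_imp_Limsup) auto
  moreover have "Lim at_top (upper_window_avg I) = Limsup at_top (upper_window_avg I)"
    using upper_window_avg_tendsto_Limsup by (intro tendsto_Lim) auto
  moreover have "Limsup at_top (upper_window_avg I) \<le> Limsup at_top (\<lambda>\<theta>. ereal (r + 2 * C / \<theta>))"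
    using avg_le by (intro Limsup_mono eventually_mono[OF eventually_gt_at_top[of 0]]) auto
  ultimately show ?thesis
    using r by simp
qed

end

section \<open>Windows of an exponential average\<close>

lemma set_integrable_Icc_bounded:
  fixes g :: "real \<Rightarrow> real"
  assumes [measurable]: "g \<in> borel_measurable borel" and bound: "\<And>t. t \<in> {a..b} \<Longrightarrow> \<bar>g t\<bar> \<le> B"
  shows "set_integrable lborel {a..b} g"
proof (rule set_integrable_bound[where f = "\<lambda>_. B"])
  show "set_integrable lborel {a..b} (\<lambda>_. B)"
    by (intro borel_integrable_atLeastAtMost' continuous_on_const)
  show "set_borel_measurable lborel {a..b} g"
    unfolding set_borel_measurable_def by measurable
  show "AE t in lborel. t \<in> {a..b} \<longrightarrow> norm (g t) \<le> norm B"
    using bound by (intro AE_I2 impI) (metis abs_ge_self order_trans real_norm_def)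
qed

lemma set_integral_abs_le:
  fixes g G :: "'a \<Rightarrow> real"
  assumes "set_integrable M A g" "set_integrable M A G" "\<And>t. t \<in> A \<Longrightarrow> \<bar>g t\<bar> \<le> G t"
  shows "\<bar>LINT t:A|M. g t\<bar> \<le> (LINT t:A|M. G t)"
proof -
  have "\<bar>LINT t:A|M. g t\<bar> \<le> (LINT t:A|M. \<bar>g t\<bar>)"
    using set_integral_norm_bound[OF assms(1)] by simp
  also have "\<dots> \<le> (LINT t:A|M. G t)"
    using assms by (intro set_integral_mono set_integrable_abs) auto
  finally show ?thesis .
qed

lemma set_integral_exp:
  fixes a b :: real
  assumes "a \<le> b"
  shows "(LINT t:{a..b}|lborel. exp t) = exp b - exp a"
  unfolding set_lebesgue_integral_def
  by (rule integral_FTC_atLeastAtMost[OF assms])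
     (auto intro!: derivative_eq_intros continuous_intros
       simp: has_real_derivative_iff_has_vector_derivative[symmetric])

lemma set_integral_exp_minus:
  fixes a b :: real
  assumes "a \<le> b"
  shows "(LINT t:{a..b}|lborel. exp (- t)) = exp (- a) - exp (- b)"
proof -
  have "(LINT t:{a..b}|lborel. exp (- t)) = (- exp (- b)) - (- exp (- a))"
    unfolding set_lebesgue_integral_def
    by (rule integral_FTC_atLeastAtMost[OF assms])
       (auto intro!: derivative_eq_intros continuous_intros
         simp: has_real_derivative_iff_has_vector_derivative[symmetric])
  then show ?thesis by simp
qed

definition exp_average :: "(real \<Rightarrow> real) \<Rightarrow> real \<Rightarrow> real" where
  "exp_average h x = exp (- x) * (LINT t:{0..x}|lborel. h t * exp t)"

context
  fixes h :: "real \<Rightarrow> real" and C :: real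
  assumes h_borel [measurable]: "h \<in> borel_measurable borel" and h_abs_le: "\<And>t. \<bar>h t\<bar> \<le> C"
begin

lemma window_set_integrable: "set_integrable lborel {a..b} h"
  using h_abs_le by (intro set_integrable_Icc_bounded) auto

lemma exp_weighted_set_integrable: "set_integrable lborel {a..b} (\<lambda>t. h t * exp t)"
proof (rule set_integrable_Icc_bounded)
  show "\<bar>h t * exp t\<bar> \<le> C * exp b" if "t \<in> {a..b}" for t
    using that h_abs_le[of t] h_abs_le[of 0] by (auto simp: abs_mult intro!: mult_mono)
qed measurable

lemma window_integral_abs_le:
  assumes "0 \<le> \<theta>"
  shows "\<bar>LINT t:{x..x+\<theta>}|lborel. h t\<bar> \<le> C * \<theta>"
proof -
  have "\<bar>LINT t:{x..x+\<theta>}|lborel. h t\<bar> \<le> (LINT t:{x..x+\<theta>}|lborel. C)"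
    using h_abs_le
    by (intro set_integral_abs_le window_set_integrable borel_integrable_atLeastAtMost' continuous_on_const)
  then show ?thesis
    using assms by (simp add: set_integral_const mult.commute)
qed

lemma window_integral_add:
  assumes "0 \<le> a" "0 \<le> b"
  shows "(LINT t:{x..x+(a+b)}|lborel. h t)
    = (LINT t:{x..x+a}|lborel. h t) + (LINT t:{x+a..x+a+b}|lborel. h t)"
proof -
  have "{x..x+(a+b)} = {x..x+a} \<union> {x+a..x+a+b}"
    using assms by auto
  moreover have "AE t in lborel. \<not> (t \<in> {x..x+a} \<and> t \<in> {x+a..x+a+b})"
    by (rule eventually_mono[OF AE_lborel_singleton[of "x+a"]]) auto
  ultimately show ?thesis
    by (simp add: set_integral_Un_AE window_set_integrable)
qed

lemma exp_average_abs_le: "\<bar>exp_average h x\<bar> \<le> C"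
proof (cases "0 \<le> x")
  case False
  then show ?thesis
    using h_abs_le[of 0] by (simp add: exp_average_def set_lebesgue_integral_def)
next
  case True
  have "\<bar>LINT t:{0..x}|lborel. h t * exp t\<bar> \<le> (LINT t:{0..x}|lborel. C * exp t)"
    using h_abs_le
    by (intro set_integral_abs_le exp_weighted_set_integrable borel_integrable_atLeastAtMost' continuous_intros)
       (auto simp: abs_mult)
  also have "\<dots> = C * (exp x - 1)"
    using set_integral_exp[OF True] by simp
  finally have "\<bar>exp_average h x\<bar> \<le> exp (- x) * (C * (exp x - 1))"
    by (simp add: exp_average_def abs_mult)
  also have "\<dots> = C - C * exp (- x)"
    by (simp add: algebra_simps exp_minus_inverse)
  also have "\<dots> \<le> C"
    using h_abs_le[of 0] by simp
  finally show ?thesis .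
qed

lemma exp_weighted_integral_eq:
  assumes "0 \<le> x" "0 \<le> \<theta>"
  shows "(LINT s:{0..x+\<theta>}|lborel. h s * exp s * (exp (- max s x) - exp (- (x + \<theta>))))
    = exp_average h x + (LINT s:{x..x+\<theta>}|lborel. h s) - exp_average h (x + \<theta>)"
proof -
  have integrand_eq: "indicator {0..x+\<theta>} s * (h s * exp s * (exp (- max s x) - exp (- (x + \<theta>))))
      = exp (- x) * (indicator {0..x} s * (h s * exp s)) + indicator {x<..x+\<theta>} s * h s
        - exp (- (x + \<theta>)) * (indicator {0..x+\<theta>} s * (h s * exp s))" for s
    using assms by (auto simp: indicator_def max_def algebra_simps exp_minus_inverse)
  have "set_integrable lborel {x<..x+\<theta>} h"
    by (rule set_integrable_subset[OF window_set_integrable[of x "x+\<theta>"]]) auto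
  then have "(LINT s:{0..x+\<theta>}|lborel. h s * exp s * (exp (- max s x) - exp (- (x + \<theta>))))
      = exp (- x) * (LINT s:{0..x}|lborel. h s * exp s) + (LINT s:{x<..x+\<theta>}|lborel. h s)
        - exp (- (x + \<theta>)) * (LINT s:{0..x+\<theta>}|lborel. h s * exp s)"
    using exp_weighted_set_integrable[of 0 x] exp_weighted_set_integrable[of 0 "x+\<theta>"]
    unfolding set_lebesgue_integral_def set_integrable_def real_scaleR_def integrand_eq
    by simp
  also have "(LINT s:{x<..x+\<theta>}|lborel. h s) = (LINT s:{x..x+\<theta>}|lborel. h s)"
    by (rule set_integral_cong_set)
       (auto simp: set_borel_measurable_def intro!: eventually_mono[OF AE_lborel_singleton[of x]])
  finally show ?thesis
    by (simp add: exp_average_def)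
qed

lemma window_integral_eq_exp_average:
  assumes x: "0 \<le> x" and \<theta>: "0 \<le> \<theta>"
  shows "set_integrable lborel {x..x+\<theta>} (exp_average h)"
    and "(LINT t:{x..x+\<theta>}|lborel. h t)
      = exp_average h (x + \<theta>) - exp_average h x + (LINT t:{x..x+\<theta>}|lborel. exp_average h t)"
proof -
  define k where "k s t = (if x \<le> t \<and> t \<le> x + \<theta> \<and> 0 \<le> s \<and> s \<le> t then h s * exp s * exp (- t) else 0)"
    for s t :: real
  have k_integrable: "integrable (lborel \<Otimes>\<^sub>M lborel) (case_prod k)"
  proof (rule Bochner_Integration.integrable_bound)
    show "integrable (lborel \<Otimes>\<^sub>M lborel) (\<lambda>p. C * indicator ({0..x+\<theta>} \<times> {x..x+\<theta>}) p)"
      by (intro integrable_mult_right integrable_real_indicator)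
         (auto simp: lborel.emeasure_pair_measure_Times emeasure_lborel_Icc_eq ennreal_mult_less_top)
    show "case_prod k \<in> borel_measurable (lborel \<Otimes>\<^sub>M lborel)"
      unfolding k_def by measurable
    have "\<bar>k s t\<bar> \<le> C * indicator ({0..x+\<theta>} \<times> {x..x+\<theta>}) (s, t)" for s t
    proof (cases "x \<le> t \<and> t \<le> x + \<theta> \<and> 0 \<le> s \<and> s \<le> t")
      case True
      then have "exp s * exp (- t) \<le> 1"
        by (simp flip: exp_add)
      then have "\<bar>h s\<bar> * (exp s * exp (- t)) \<le> C * 1"
        using h_abs_le[of s] h_abs_le[of 0] by (intro mult_mono) auto
      then show ?thesis
        using True by (auto simp: k_def abs_mult mult.assoc)
    qed (use h_abs_le[of 0] in \<open>auto simp: k_def\<close>)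
    then show "AE p in lborel \<Otimes>\<^sub>M lborel. norm (case_prod k p) \<le> norm (C * indicator ({0..x+\<theta>} \<times> {x..x+\<theta>}) p)"
      using h_abs_le[of 0] by (intro AE_I2) (auto simp: abs_mult)
  qed
  have inner_s: "(LINT s|lborel. k s t) = indicator {x..x+\<theta>} t * exp_average h t" for t
  proof -
    have "(\<lambda>s. k s t) = (\<lambda>s. (indicator {x..x+\<theta>} t * exp (- t)) * (indicator {0..t} s *\<^sub>R (h s * exp s)))"
      by (auto simp: k_def fun_eq_iff indicator_def)
    then show ?thesis
      by (simp add: exp_average_def set_lebesgue_integral_def)
  qed
  have inner_t: "(LINT t|lborel. k s t)
      = indicator {0..x+\<theta>} s * (h s * exp s * (exp (- max s x) - exp (- (x + \<theta>))))" for s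
  proof (cases "s \<in> {0..x+\<theta>}")
    case True
    then have "(\<lambda>t. k s t) = (\<lambda>t. (h s * exp s) * (indicator {max s x..x+\<theta>} t *\<^sub>R exp (- t)))"
      by (auto simp: k_def fun_eq_iff indicator_def)
    moreover have "max s x \<le> x + \<theta>"
      using True \<theta> by auto
    ultimately show ?thesis
      using True set_integral_exp_minus[of "max s x" "x + \<theta>"]
      by (simp add: set_lebesgue_integral_def del: max.bounded_iff)
  next
    case False
    then have "(\<lambda>t. k s t) = (\<lambda>t. 0)"
      by (auto simp: k_def fun_eq_iff indicator_def)
    then show ?thesis
      using False by simp
  qed
  show "set_integrable lborel {x..x+\<theta>} (exp_average h)"
    using lborel_pair.integrable_snd[OF k_integrable] by (simp add: inner_s set_integrable_def)
  have "(LINT t|lborel. LINT s|lborel. k s t) = (LINT s|lborel. LINT t|lborel. k s t)"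
    by (rule lborel_pair.Fubini_integral[OF k_integrable])
  then show "(LINT t:{x..x+\<theta>}|lborel. h t)
      = exp_average h (x + \<theta>) - exp_average h x + (LINT t:{x..x+\<theta>}|lborel. exp_average h t)"
    using exp_weighted_integral_eq[OF x \<theta>]
    by (simp add: inner_s inner_t set_lebesgue_integral_def)
qed

lemma window_integral_le:
  assumes "0 \<le> x" "0 \<le> \<theta>" and upper: "\<And>t. x \<le> t \<Longrightarrow> exp_average h t \<le> c"
  shows "(LINT t:{x..x+\<theta>}|lborel. h t) \<le> 2 * C + c * \<theta>"
proof -
  have "(LINT t:{x..x+\<theta>}|lborel. exp_average h t) \<le> (LINT t:{x..x+\<theta>}|lborel. c)"
    using upper
    by (intro set_integral_mono window_integral_eq_exp_average(1)[OF assms(1,2)]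
        borel_integrable_atLeastAtMost' continuous_on_const) auto
  also have "\<dots> = c * \<theta>"
    using assms by (simp add: set_integral_const mult.commute)
  finally show ?thesis
    using window_integral_eq_exp_average(2)[OF assms(1,2)]
      exp_average_abs_le[of "x + \<theta>"] exp_average_abs_le[of x]
    by linarith
qed

end

section \<open>Bounded Borel representatives\<close>

lemma set_integral_lebesgue_eq_lborel:
  fixes g g' :: "real \<Rightarrow> real"
  assumes "set_borel_measurable lebesgue A g"
    and [measurable]: "g' \<in> borel_measurable borel" "A \<in> sets borel"
    and eq: "AE t in lborel. t \<in> A \<longrightarrow> g t = g' t"
  shows "(LINT t:A|lebesgue. g t) = (LINT t:A|lborel. g' t)"
proof -
  have "(LINT t:A|lebesgue. g t) = (LINT t:A|lebesgue. g' t)"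
    unfolding set_lebesgue_integral_def
  proof (rule integral_cong_AE)
    show "(\<lambda>t. indicator A t *\<^sub>R g t) \<in> borel_measurable lebesgue"
      using assms(1) by (simp add: set_borel_measurable_def)
    show "(\<lambda>t. indicator A t *\<^sub>R g' t) \<in> borel_measurable lebesgue"
      by (intro measurable_completion) measurable
    show "AE t in lebesgue. indicator A t *\<^sub>R g t = indicator A t *\<^sub>R g' t"
      using eq by (auto simp: AE_completion_iff indicator_def elim!: eventually_mono)
  qed
  also have "\<dots> = (LINT t:A|lborel. g' t)"
    unfolding set_lebesgue_integral_def by (rule integral_completion) measurable
  finally show ?thesis .
qed

lemma Linf_Rplus_bounded_representative:
  assumes "f \<in> Linf_Rplus"
  obtains h C where "h \<in> borel_measurable borel" and "\<And>t. \<bar>h t\<bar> \<le> C"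
    and "\<And>A w. A \<in> sets borel \<Longrightarrow> A \<subseteq> {0..} \<Longrightarrow> w \<in> borel_measurable borel \<Longrightarrow>
      (LINT t:A|lebesgue. f t * w t) = (LINT t:A|lborel. h t * w t)"
proof -
  obtain C where f_meas: "f \<in> borel_measurable (restrict_space lebesgue {0..})"
    and f_bound: "AE t in lebesgue. t \<ge> 0 \<longrightarrow> \<bar>f t\<bar> \<le> C"
    using assms unfolding Linf_Rplus_def by auto
  have f0_meas: "(\<lambda>t. indicator {0..} t *\<^sub>R f t) \<in> borel_measurable lebesgue"
    using f_meas by (subst (asm) borel_measurable_restrict_space_iff) auto
  obtain g where g_meas [measurable]: "g \<in> borel_measurable borel"
    and g_eq: "AE t in lborel. indicator {0..} t *\<^sub>R f t = g t"
    using completion_ex_borel_measurable_real[OF f0_meas] by auto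
  define h where "h t = (if 0 \<le> t then max (- \<bar>C\<bar>) (min \<bar>C\<bar> (g t)) else 0)" for t
  have h_meas [measurable]: "h \<in> borel_measurable borel"
    unfolding h_def by measurable
  have h_eq: "AE t in lborel. 0 \<le> t \<longrightarrow> f t = h t"
    using g_eq f_bound[unfolded AE_completion_iff]
    by eventually_elim (auto simp: h_def)
  show thesis
  proof (rule that[OF h_meas])
    show "\<bar>h t\<bar> \<le> \<bar>C\<bar>" for t
      by (auto simp: h_def)
    fix A :: "real set" and w :: "real \<Rightarrow> real"
    assume [measurable]: "A \<in> sets borel" and A: "A \<subseteq> {0..}"
      and [measurable]: "w \<in> borel_measurable borel"
    show "(LINT t:A|lebesgue. f t * w t) = (LINT t:A|lborel. h t * w t)"
    proof (rule set_integral_lebesgue_eq_lborel)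
      have "(\<lambda>t. indicator A t *\<^sub>R (f t * w t)) = (\<lambda>t. (indicator A t * w t) * (indicator {0..} t *\<^sub>R f t))"
        using A by (auto simp: indicator_def fun_eq_iff)
      moreover have "(\<lambda>t. indicator A t * w t) \<in> borel_measurable lebesgue"
        by (intro measurable_completion) measurable
      ultimately show "set_borel_measurable lebesgue A (\<lambda>t. f t * w t)"
        unfolding set_borel_measurable_def using f0_meas by simp
      show "AE t in lborel. t \<in> A \<longrightarrow> f t * w t = h t * w t"
        using h_eq A by (auto elim!: eventually_mono)
    qed measurable
  qed
qed

theorem theorem3p5:
  fixes f :: "real \<Rightarrow> real"
  assumes "f \<in> Linf_Rplus"
  shows "M1_upper f \<le> R_upper f"
proof -
  obtain h C where h_meas [measurable]: "h \<in> borel_measurable borel" and h_abs_le: "\<And>t. \<bar>h t\<bar> \<le> C"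
    and integral_eq: "\<And>A w. A \<in> sets borel \<Longrightarrow> A \<subseteq> {0..} \<Longrightarrow> w \<in> borel_measurable borel \<Longrightarrow>
      (LINT t:A|lebesgue. f t * w t) = (LINT t:A|lborel. h t * w t)"
    using Linf_Rplus_bounded_representative[OF assms] by blast
  define I where "I x \<theta> = (LINT t:{x..x+\<theta>}|lborel. h t)" for x \<theta>
  interpret additive_window_function I C
  proof
    show "\<bar>I x \<theta>\<bar> \<le> C * \<theta>" if "0 \<le> \<theta>" for x \<theta>
      using window_integral_abs_le[OF h_meas h_abs_le that] by (simp add: I_def)
    show "I x (a + b) = I x a + I (x + a) b" if "0 \<le> a" "0 \<le> b" for x a b
      using window_integral_add[OF h_meas h_abs_le that] by (simp add: I_def add.assoc)
  qed
  have "M1_upper f = Lim at_top (upper_window_avg I)"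
    unfolding M1_upper_def upper_window_avg_def
    using integral_eq[of "{_.._}" "\<lambda>_. 1"]
    by (intro arg_cong[where f = "Lim at_top"] ext Limsup_eq eventually_mono[OF eventually_ge_at_top[of 0]])
       (simp add: I_def)
  moreover have "R_upper f = Limsup at_top (\<lambda>x. ereal (exp_average h x))"
    unfolding R_upper_def exp_average_def using integral_eq[of "{0.._}" exp] by simp
  moreover have "Lim at_top (upper_window_avg I) \<le> Limsup at_top (\<lambda>x. ereal (exp_average h x))"
    using exp_average_abs_le[OF h_meas h_abs_le] window_integral_le[OF h_meas h_abs_le]
    by (intro upper_window_avg_le_Limsup) (auto simp: I_def)
  ultimately show ?thesis by simp
qed

end
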